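(* Let $F:\mathbb{R}^d\to[0,\infty)$ be differentiable and $\mu$-strongly convex ($\mu>0$), let $\lambda_t>0$, $\epsilon_t\in[0,1)$, and $x_{t-1}\in\mathbb{R}^d$. Let $F_{\lambda_t,x_{t-1}}(x)=F(x)+\lambda_t\|x-x_{t-1}\|_2^2$ with unique minimizer $x^\star_{\lambda_t,x_{t-1}}$, and let $x_t\in\mathbb{R}^d$ satisfy $F_{\lambda_t,x_{t-1}}(x_t)\le(1+\epsilon_t)F_{\lambda_t,x_{t-1}}(x^\star_{\lambda_t,x_{t-1}})$. Let $r_t^\star=\|x_{t-1}-x^\star_{\lambda_t,x_{t-1}}\|_2$. Then $$\|x_t-x_{t-1}\|_2\le\sqrt{\frac{2\epsilon_t}{2\lambda_t+\mu}F(x_{t-1})}+\frac{\|\nabla F(x_{t-1})\|_2}{2\lambda_t+\mu}$$ and $$\|x_t-x_{t-1}\|_2\ge r_t^\star-\sqrt{\frac{2\epsilon_t}{2\lambda_t+\mu}F(x_{t-1})}.$$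
   Context: $F$ is $\mu$-strongly convex if $F(u)\ge F(v)+\langle\nabla F(v),u-v\rangle+\frac\mu2\|u-v\|_2^2$ for all $u,v$. *)

theory Defs
  imports "HOL-Analysis.Analysis"
begin

end

theory Submission
  imports Defs
begin

text \<open>Let \<open>m = 2\<lambda> + \<mu>\<close> and \<open>p = x\<^sub>t\<^sub>-\<^sub>1\<close>. The proximal objective
  \<open>F(x) + \<lambda>\<parallel>x - p\<parallel>\<^sup>2\<close> is \<open>m\<close>-strongly convex with vanishing gradient at its minimiser \<open>x\<^sup>\<star>\<close>,
  so it exceeds its optimal value by at least \<open>m/2 \<parallel>x - x\<^sup>\<star>\<parallel>\<^sup>2\<close>. For \<open>x\<^sub>t\<close> that excess is at most
  \<open>\<epsilon>\<^sub>t\<close> times the optimal value, itself at most \<open>F(p)\<close>; hence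
  \<open>\<parallel>x\<^sub>t - x\<^sup>\<star>\<parallel> \<le> \<surd>(2\<epsilon>\<^sub>t F(p)/m)\<close>. Adding the strong convexity inequalities between \<open>x\<^sup>\<star>\<close>
  and \<open>p\<close> in both directions and using the optimality condition
  \<open>\<nabla>F(x\<^sup>\<star>) = -2\<lambda>(x\<^sup>\<star> - p)\<close> gives \<open>m\<parallel>x\<^sup>\<star> - p\<parallel>\<^sup>2 \<le> \<parallel>\<nabla>F(p)\<parallel> \<parallel>x\<^sup>\<star> - p\<parallel>\<close>.
  Both bounds follow by the triangle inequality.\<close>

lemma prox_minimizer_gradient:
  fixes F :: "'a::real_inner \<Rightarrow> real"
  assumes deriv: "(F has_derivative (\<lambda>h. g \<bullet> h)) (at xstar)"
    and min: "\<And>x. F xstar + lam * (norm (xstar - p))\<^sup>2 \<le> F x + lam * (norm (x - p))\<^sup>2"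
  shows "g = - (2 * lam) *\<^sub>R (xstar - p)"
proof -
  define G where "G x = F x + lam * ((x - p) \<bullet> (x - p))" for x
  have "(G has_derivative (\<lambda>h. g \<bullet> h + lam * (h \<bullet> (xstar - p) + (xstar - p) \<bullet> h))) (at xstar)"
    unfolding G_def by (auto intro!: derivative_eq_intros deriv)
  moreover have "\<forall>x\<in>UNIV. G xstar \<le> G x"
    using min by (simp add: G_def power2_norm_eq_inner)
  ultimately have deriv_zero: "(\<lambda>h. g \<bullet> h + lam * (h \<bullet> (xstar - p) + (xstar - p) \<bullet> h)) = (\<lambda>h. 0)"
    by (intro differential_zero_maxmin[of xstar UNIV]) auto
  have "(g + (2 * lam) *\<^sub>R (xstar - p)) \<bullet> h = 0" for h
    using fun_cong[OF deriv_zero, of h] by (simp add: inner_add_left inner_commute[of h])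
  then have "g + (2 * lam) *\<^sub>R (xstar - p) = 0"
    by (meson inner_eq_zero_iff)
  then show ?thesis
    by (simp add: eq_neg_iff_add_eq_0)
qed

lemma norm_diff_square_expand:
  fixes x y p :: "'a::real_inner"
  shows "(norm (x - p))\<^sup>2 = (norm (y - p))\<^sup>2 + 2 * ((y - p) \<bullet> (x - y)) + (norm (x - y))\<^sup>2"
proof -
  have "x - p = (y - p) + (x - y)" by simp
  then show ?thesis
    by (metis power2_norm_eq_inner inner_add_left inner_add_right inner_commute mult_2 add.assoc)
qed

lemma prox_objective_quadratic_growth:
  fixes F :: "'a::real_inner \<Rightarrow> real"
  assumes strong: "\<And>x. F x \<ge> F xstar + g \<bullet> (x - xstar) + \<mu> / 2 * (norm (x - xstar))\<^sup>2"
    and g: "g = - (2 * lam) *\<^sub>R (xstar - p)"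
  shows "F x + lam * (norm (x - p))\<^sup>2
    \<ge> F xstar + lam * (norm (xstar - p))\<^sup>2 + (2 * lam + \<mu>) / 2 * (norm (x - xstar))\<^sup>2"
proof -
  have "g \<bullet> (x - xstar) = - (2 * lam) * ((xstar - p) \<bullet> (x - xstar))"
    by (simp add: g)
  moreover have "lam * (norm (x - p))\<^sup>2
      = lam * (norm (xstar - p))\<^sup>2 + 2 * lam * ((xstar - p) \<bullet> (x - xstar)) + lam * (norm (x - xstar))\<^sup>2"
    by (simp add: norm_diff_square_expand[of x p xstar] distrib_left)
  moreover have "(2 * lam + \<mu>) / 2 * (norm (x - xstar))\<^sup>2 = lam * (norm (x - xstar))\<^sup>2 + \<mu> / 2 * (norm (x - xstar))\<^sup>2"
    by (simp add: field_simps)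
  ultimately show ?thesis
    using strong[of x] by linarith
qed

lemma prox_minimizer_dist_le:
  fixes F :: "'a::real_inner \<Rightarrow> real"
  assumes strong: "\<And>u v. F u \<ge> F v + gradF v \<bullet> (u - v) + \<mu> / 2 * (norm (u - v))\<^sup>2"
    and g: "gradF xstar = - (2 * lam) *\<^sub>R (xstar - p)"
    and m_pos: "2 * lam + \<mu> > 0"
  shows "norm (xstar - p) \<le> norm (gradF p) / (2 * lam + \<mu>)"
proof -
  define d where "d = xstar - p"
  have "F xstar \<ge> F p + gradF p \<bullet> d + \<mu> / 2 * (norm d)\<^sup>2"
    using strong[where u = xstar and v = p] by (simp add: d_def)
  moreover have "F p \<ge> F xstar + gradF xstar \<bullet> (p - xstar) + \<mu> / 2 * (norm d)\<^sup>2"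
    using strong[where u = p and v = xstar] by (metis d_def norm_minus_commute)
  moreover have "gradF xstar \<bullet> (p - xstar) = 2 * lam * (norm d)\<^sup>2"
  proof -
    have "gradF xstar = - (2 * lam) *\<^sub>R d" and "p - xstar = - d"
      using g by (simp_all add: d_def)
    then show ?thesis
      by (simp add: power2_norm_eq_inner)
  qed
  ultimately have "(2 * lam + \<mu>) * (norm d)\<^sup>2 \<le> - (gradF p \<bullet> d)"
    by (simp add: field_simps)
  also have "\<dots> \<le> norm (gradF p) * norm d"
    by (metis Cauchy_Schwarz_ineq2 abs_le_iff)
  finally have "(2 * lam + \<mu>) * norm d \<le> norm (gradF p) \<or> norm d = 0"
    by (auto simp: power2_eq_square)
  then show ?thesis
    using m_pos by (auto simp: d_def field_simps)
qed

lemma near_prox_minimizer_dist_le: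
  fixes F :: "'a::real_inner \<Rightarrow> real"
  assumes growth: "\<And>x. F x + lam * (norm (x - p))\<^sup>2
      \<ge> F xstar + lam * (norm (xstar - p))\<^sup>2 + m / 2 * (norm (x - xstar))\<^sup>2"
    and m_pos: "m > 0" and eps_nonneg: "\<epsilon> \<ge> 0"
    and approx: "F xt + lam * (norm (xt - p))\<^sup>2 \<le> (1 + \<epsilon>) * (F xstar + lam * (norm (xstar - p))\<^sup>2)"
  shows "norm (xt - xstar) \<le> sqrt (2 * \<epsilon> / m * F p)"
proof -
  define opt where "opt = F xstar + lam * (norm (xstar - p))\<^sup>2"
  have "0 \<le> m / 2 * (norm (p - xstar))\<^sup>2"
    using m_pos by simp
  then have "opt \<le> F p"
    using growth[of p] by (simp add: opt_def)
  have "m / 2 * (norm (xt - xstar))\<^sup>2 \<le> \<epsilon> * opt"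
    using growth[of xt] approx by (simp add: opt_def algebra_simps)
  also have "\<dots> \<le> \<epsilon> * F p"
    using \<open>opt \<le> F p\<close> eps_nonneg by (simp add: mult_left_mono)
  finally have "(norm (xt - xstar))\<^sup>2 \<le> 2 * \<epsilon> / m * F p"
    using m_pos by (simp add: field_simps)
  then show ?thesis
    by (rule real_le_rsqrt)
qed

theorem corollaryC1:
  fixes F :: "real ^ 'd \<Rightarrow> real"
    and gradF :: "real ^ 'd \<Rightarrow> real ^ 'd"
    and \<mu> lam \<epsilon> :: real
    and xprev xstar xt :: "real ^ 'd"
  assumes nonneg: "\<And>x. F x \<ge> 0"
    and grad: "\<And>x. (F has_derivative (\<lambda>h. gradF x \<bullet> h)) (at x)"
    and mu_pos: "\<mu> > 0"
    and strong: "\<And>u v. F u \<ge> F v + gradF v \<bullet> (u - v) + \<mu> / 2 * (norm (u - v))\<^sup>2"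
    and lam_pos: "lam > 0"
    and eps: "0 \<le> \<epsilon>" "\<epsilon> < 1"
    and xstar_min: "\<And>x. F xstar + lam * (norm (xstar - xprev))\<^sup>2 \<le> F x + lam * (norm (x - xprev))\<^sup>2"
    and xt_approx: "F xt + lam * (norm (xt - xprev))\<^sup>2 \<le> (1 + \<epsilon>) * (F xstar + lam * (norm (xstar - xprev))\<^sup>2)"
  shows "norm (xt - xprev) \<le> sqrt (2 * \<epsilon> / (2 * lam + \<mu>) * F xprev) + norm (gradF xprev) / (2 * lam + \<mu>)
     \<and> norm (xt - xprev) \<ge> norm (xprev - xstar) - sqrt (2 * \<epsilon> / (2 * lam + \<mu>) * F xprev)"
proof -
  have m_pos: "2 * lam + \<mu> > 0"
    using mu_pos lam_pos by simp
  have g: "gradF xstar = - (2 * lam) *\<^sub>R (xstar - xprev)"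
    using grad xstar_min by (rule prox_minimizer_gradient)
  have "norm (xt - xstar) \<le> sqrt (2 * \<epsilon> / (2 * lam + \<mu>) * F xprev)"
    using prox_objective_quadratic_growth[OF strong g] m_pos eps(1) xt_approx
    by (rule near_prox_minimizer_dist_le)
  moreover have "norm (xstar - xprev) \<le> norm (gradF xprev) / (2 * lam + \<mu>)"
    using strong g m_pos by (rule prox_minimizer_dist_le)
  moreover have "norm (xt - xprev) \<le> norm (xt - xstar) + norm (xstar - xprev)"
    using norm_triangle_ineq[of "xt - xstar" "xstar - xprev"] by simp
  moreover have "norm (xprev - xstar) \<le> norm (xt - xprev) + norm (xt - xstar)"
    using norm_triangle_ineq[of "xprev - xt" "xt - xstar"] norm_minus_commute[of xprev xt] by simp
  ultimately show ?thesis
    by linarith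
qed

end
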